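(* Assume $\sigma_1(x)=\tfrac12\sigma_1''(0)(x-a_1)(x-b_1)$ and $\sigma_2(x)=\tfrac12\sigma_2''(0)(x-a_2)(x-b_2)$ with $\sigma_1''(0)\ne0$, $\sigma_2''(0)\ne0$ and real zeros satisfying $0<a_1<a_2<b_1<b_2$, and assume $0<q^2\Lambda_q<1$, where $\Lambda_q=q^{-2}\Big[1+\frac{(1-q^{-1})\tau'(0)}{\frac12\sigma_1''(0)}\Big]$. Put $a=a_2$, $b=q^{-1}b_1$, and suppose $q^{-N-1}a=b$ for some $N\in\mathbb{N}_0$. Let $$\rho(x)=|x|^{\iota}\frac{(qa/x,\,x/b;q)_\infty}{(a_1/x,\,x/b_2;q)_\infty},\qquad q^{\iota}=\frac{q^{-3}\sigma_2''(0)b_2}{\sigma_1''(0)b}.$$ Then there exist polynomials $P_0,\dots,P_N$, with $P_n$ of degree $n$ a solution of the q-EHT with $\lambda=\lambda_n$, and nonzero constants $d_n^2$, such that for $m,n\in\{0,\dots,N\}$ $$\int_a^{b}P_n(x)P_m(x)\rho(x)\,d_{q^{-1}}x=d_n^2\delta_{mn},$$ i.e. orthogonality with respect to $\rho$ supported on $\{q^{-k}a\}_{k=0}^N$.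
   Context: Throughout $0<q<1$. For a function $y$ and $\zeta\in\{q,q^{-1}\}$, $D_\zeta y(x)=\frac{y(x)-y(\zeta x)}{(1-\zeta)x}$ for $x\ne0$ and $D_\zeta y(0)=y'(0)$; $[n]_q=\frac{1-q^n}{1-q}$. Let $\sigma_1$ be a real polynomial of degree at most two, $\tau(x)=\tau'(0)x+\tau(0)$ a real polynomial with $\tau'(0)\ne0$, and $\sigma_2(x):=q[\sigma_1(x)+(1-q^{-1})x\tau(x)]$. The q-EHT with parameter $n$ is $\sigma_1(x)D_{q^{-1}}D_qy(x)+\tau(x)D_qy(x)+\lambda_ny(x)=0$, $\lambda_n=-[n]_q\big(\tau'(0)+\tfrac12[n-1]_{q^{-1}}\sigma_1''(0)\big)$. $(\alpha;q)_\infty=\prod_{k\ge0}(1-\alpha q^k)$, $(\alpha_1,\dots,\alpha_r;q)_\infty=\prod_i(\alpha_i;q)_\infty$. For $q^{\iota}=c$ ($c\ne0$), $\iota$ is any complex number with $e^{\iota\ln q}=c$ and $|x|^{\iota}:=e^{\iota\ln|x|}$. For $a>0$ and $b=q^{-N-1}a$, $\int_a^{b}f(x)\,d_{q^{-1}}x=(q^{-1}-1)a\sum_{k=0}^{N}q^{-k}f(q^{-k}a)$. *)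

theory Defs
  imports "HOL-Analysis.Analysis" "HOL-Computational_Algebra.Polynomial"
begin

definition qD :: "real \<Rightarrow> (real \<Rightarrow> real) \<Rightarrow> real \<Rightarrow> real" where
  "qD \<zeta> y x = (if x = 0 then deriv y 0 else (y x - y (\<zeta> * x)) / ((1 - \<zeta>) * x))"

definition qnum :: "real \<Rightarrow> int \<Rightarrow> real" where
  "qnum q n = (1 - q powi n) / (1 - q)"

definition qpoch_inf :: "real \<Rightarrow> real \<Rightarrow> real" where
  "qpoch_inf \<alpha> q = (\<Prod>k. 1 - \<alpha> * q ^ k)"

definition qEHT_lambda :: "real \<Rightarrow> real poly \<Rightarrow> real poly \<Rightarrow> nat \<Rightarrow> real" where
  "qEHT_lambda q \<sigma>1 \<tau> n =
     - qnum q (int n) * (coeff \<tau> 1 + 1/2 * qnum (1/q) (int n - 1) * poly (pderiv (pderiv \<sigma>1)) 0)"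

definition solves_qEHT :: "real \<Rightarrow> real poly \<Rightarrow> real poly \<Rightarrow> real \<Rightarrow> (real \<Rightarrow> real) \<Rightarrow> bool" where
  "solves_qEHT q \<sigma>1 \<tau> lam y \<longleftrightarrow>
     (\<forall>x. poly \<sigma>1 x * qD (1/q) (qD q y) x + poly \<tau> x * qD q y x + lam * y x = 0)"

text \<open>Jackson-type q^{-1}-integral from a to b = q^{-N-1} a.\<close>
definition qinv_integral :: "real \<Rightarrow> real \<Rightarrow> nat \<Rightarrow> (real \<Rightarrow> complex) \<Rightarrow> complex" where
  "qinv_integral q a N f =
     complex_of_real ((1/q - 1) * a) * (\<Sum>k = 0..N. complex_of_real ((1/q) ^ k) * f ((1/q) ^ k * a))"

end

theory Submission
  imports Defs
begin

text \<open>
  On polynomials the q-EHT operator is triangular in the monomial basis with diagonal entries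
  \<open>-\<lambda>\<^sub>j\<close>, and \<open>0 < q\<^sup>2\<Lambda> < 1\<close> makes \<open>\<lambda>\<^sub>n\<close> strictly monotone in \<open>n\<close>; hence every \<open>\<lambda>\<^sub>n\<close> has a
  polynomial eigenfunction \<open>P\<^sub>n\<close> of degree \<open>n\<close>. On the grid \<open>x\<^sub>k = q\<^sup>-\<^sup>k a\<close> the operator is a
  second-order difference operator, and the q-Pearson equation
  \<open>q \<rho>(x) \<sigma>\<^sub>1(x) = \<rho>(x/q) \<sigma>\<^sub>2(x/q)\<close> makes it symmetric for the Jackson weights \<open>q\<^sup>-\<^sup>k \<rho>(x\<^sub>k)\<close>;
  the boundary terms vanish because \<open>\<sigma>\<^sub>2(a) = 0\<close> and \<open>\<sigma>\<^sub>1(x\<^sub>N) = \<sigma>\<^sub>1(b\<^sub>1) = 0\<close>. Summation by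
  parts therefore makes eigenfunctions with distinct eigenvalues orthogonal. The weight is
  complex, so \<open>d\<^sub>n\<^sup>2 \<noteq> 0\<close> cannot come from positivity: instead, \<open>P\<^sub>0, \<dots>, P\<^sub>N\<close> span the
  polynomials of degree \<open>\<le> N\<close> and \<open>\<rho>\<close> does not vanish on the grid, so \<open>d\<^sub>n\<^sup>2 = 0\<close> would make
  \<open>P\<^sub>n\<close> vanish at all \<open>N + 1\<close> grid points.
\<close>

section \<open>The q-Pochhammer symbol\<close>

lemma qpoch_inf_convergent_prod:
  fixes q :: real assumes "\<bar>q\<bar> < 1"
  shows "convergent_prod (\<lambda>k. 1 - \<alpha> * q ^ k)"
proof -
  have "summable (\<lambda>k. norm ((1 - \<alpha> * q ^ k) - 1))"
    using assms by (simp add: abs_mult power_abs summable_geometric)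
  then show ?thesis
    by (intro abs_convergent_prod_imp_convergent_prod summable_imp_abs_convergent_prod)
qed

lemma qpoch_inf_rec:
  fixes q :: real assumes "\<bar>q\<bar> < 1"
  shows "qpoch_inf \<alpha> q = (1 - \<alpha>) * qpoch_inf (\<alpha> * q) q"
proof -
  have "(\<lambda>k. 1 - \<alpha> * q ^ k) has_prod ((\<Prod>k<1. 1 - \<alpha> * q ^ k) * (\<Prod>k. 1 - \<alpha> * q ^ (k + 1)))"
    by (rule has_prod_ignore_initial_segment'[OF qpoch_inf_convergent_prod[OF assms]])
  then show ?thesis unfolding qpoch_inf_def
    by (simp add: has_prod_iff mult.assoc mult.commute)
qed

lemma qpoch_inf_nonzero:
  fixes q :: real assumes "0 \<le> q" "q < 1" "\<alpha> < 1"
  shows "qpoch_inf \<alpha> q \<noteq> 0"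
  unfolding qpoch_inf_def
proof (rule prodinf_nonzero[OF qpoch_inf_convergent_prod])
  fix k
  have "\<alpha> * q ^ k < 1"
  proof (cases "\<alpha> \<le> 0")
    case True
    then have "\<alpha> * q ^ k \<le> 0" using assms by (simp add: mult_nonpos_nonneg)
    then show ?thesis by simp
  next
    case False
    then have "\<alpha> * q ^ k \<le> \<alpha>" using assms by (simp add: mult_left_le power_le_one)
    then show ?thesis using assms by simp
  qed
  then show "1 - \<alpha> * q ^ k \<noteq> 0" by simp
qed (use assms in simp)

section \<open>Polynomial solutions of the q-EHT\<close>

lemma qnum_of_nat: "z \<noteq> 1 \<Longrightarrow> qnum z (int n) = (1 - z ^ n) / (1 - z)"
  by (simp add: qnum_def power_int_of_nat)

definition qderiv_poly :: "real \<Rightarrow> real poly \<Rightarrow> real poly" where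
  "qderiv_poly z p = (\<Sum>k\<le>degree p. monom (coeff p (Suc k) * qnum z (int (Suc k))) k)"

lemma coeff_qderiv_poly: "coeff (qderiv_poly z p) j = coeff p (Suc j) * qnum z (int (Suc j))"
proof (cases "j \<le> degree p")
  case False then have "coeff p (Suc j) = 0" by (simp add: coeff_eq_0)
  then show ?thesis using False by (simp add: qderiv_poly_def coeff_sum coeff_monom)
qed (simp add: qderiv_poly_def coeff_sum coeff_monom)

lemma qderiv_poly_add: "qderiv_poly z (p + r) = qderiv_poly z p + qderiv_poly z r"
  by (rule poly_eqI) (simp add: coeff_qderiv_poly algebra_simps)

lemma qderiv_poly_smult: "qderiv_poly z (smult c p) = smult c (qderiv_poly z p)"
  by (rule poly_eqI) (simp add: coeff_qderiv_poly)

lemma poly_qderiv_poly: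
  assumes z: "z \<noteq> 1" and x: "x \<noteq> 0"
  shows "poly (qderiv_poly z p) x = (poly p x - poly p (z * x)) / ((1 - z) * x)"
proof -
  let ?d = "degree p"
  have "poly p x - poly p (z * x) = (\<Sum>i\<le>Suc ?d. coeff p i * x ^ i * (1 - z ^ i))"
    by (simp add: poly_altdef sum_subtractf[symmetric] algebra_simps power_mult_distrib coeff_eq_0)
  also have "\<dots> = (\<Sum>k\<le>?d. coeff p (Suc k) * x ^ Suc k * (1 - z ^ Suc k))"
    by (subst sum.atMost_Suc_shift) simp
  also have "\<dots> = (1 - z) * x * (\<Sum>k\<le>?d. coeff p (Suc k) * qnum z (int (Suc k)) * x ^ k)"
    unfolding sum_distrib_left qnum_of_nat[OF z] using z by (intro sum.cong) (simp_all add: field_simps)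
  also have "(\<Sum>k\<le>?d. coeff p (Suc k) * qnum z (int (Suc k)) * x ^ k) = poly (qderiv_poly z p) x"
    by (simp add: qderiv_poly_def poly_sum poly_monom)
  finally show ?thesis using z x by (simp add: field_simps)
qed

lemma qD_poly: "z \<noteq> 1 \<Longrightarrow> qD z (poly p) = poly (qderiv_poly z p)"
proof
  fix x assume z: "z \<noteq> 1"
  show "qD z (poly p) x = poly (qderiv_poly z p) x"
  proof (cases "x = 0")
    case True
    have "deriv (poly p) 0 = poly (pderiv p) 0" by (simp add: poly_DERIV DERIV_imp_deriv)
    also have "\<dots> = coeff p 1" by (simp add: poly_0_coeff_0 coeff_pderiv)
    finally have "deriv (poly p) 0 = coeff p 1" .
    then show ?thesis
      using True z by (simp add: qD_def poly_0_coeff_0 coeff_qderiv_poly qnum_def)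
  qed (simp add: qD_def poly_qderiv_poly z)
qed

definition qEHT_op :: "real \<Rightarrow> real poly \<Rightarrow> real poly \<Rightarrow> real poly \<Rightarrow> real poly" where
  "qEHT_op q \<sigma> \<tau> p = \<sigma> * qderiv_poly (1/q) (qderiv_poly q p) + \<tau> * qderiv_poly q p"

lemma qEHT_op_add: "qEHT_op q \<sigma> \<tau> (p + r) = qEHT_op q \<sigma> \<tau> p + qEHT_op q \<sigma> \<tau> r"
  by (simp add: qEHT_op_def qderiv_poly_add algebra_simps)

lemma qEHT_op_smult: "qEHT_op q \<sigma> \<tau> (smult c p) = smult c (qEHT_op q \<sigma> \<tau> p)"
  by (simp add: qEHT_op_def qderiv_poly_smult smult_add_right)

lemma poly_pderiv_pderiv_0: "poly (pderiv (pderiv p)) 0 = 2 * coeff p 2"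
  by (simp add: poly_0_coeff_0 coeff_pderiv numeral_2_eq_2)

lemma poly_eq_pCons_coeffs_degree_le_2:
  "degree p \<le> 2 \<Longrightarrow> p = [:coeff p 0, coeff p 1, coeff p 2:]"
  by (rule poly_eqI) (auto simp: coeff_pCons coeff_eq_0 numeral_2_eq_2 split: nat.split)

lemma coeff_qEHT_op:
  assumes "degree \<sigma> \<le> 2" "degree \<tau> \<le> 1" and high: "\<And>i. j < i \<Longrightarrow> coeff p i = 0"
  shows "coeff (qEHT_op q \<sigma> \<tau> p) j = - qEHT_lambda q \<sigma> \<tau> j * coeff p j"
proof -
  have \<sigma>: "\<sigma> = [:coeff \<sigma> 0, coeff \<sigma> 1, coeff \<sigma> 2:]"
    using assms(1) by (rule poly_eq_pCons_coeffs_degree_le_2)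
  have \<tau>: "\<tau> = [:coeff \<tau> 0, coeff \<tau> 1:]"
    using assms(2) poly_eq_pCons_coeffs_degree_le_2[of \<tau>] by (simp add: coeff_eq_0)
  have zero: "coeff p (Suc j) = 0" "coeff p (Suc (Suc j)) = 0" "coeff p (Suc (Suc (Suc j))) = 0"
    using high by auto
  consider "j = 0" | "j = 1" | k where "j = Suc (Suc k)"
    by (metis One_nat_def not0_implies_Suc)
  then show ?thesis
  proof cases
    case (3 k)
    then show ?thesis using zero
      by (subst \<sigma>, subst \<tau>) (simp add: qEHT_op_def qEHT_lambda_def coeff_qderiv_poly
          poly_pderiv_pderiv_0 algebra_simps)
  qed (use zero in \<open>subst \<sigma>, subst \<tau>, simp add: qEHT_op_def qEHT_lambda_def coeff_qderiv_poly
          poly_pderiv_pderiv_0 qnum_def\<close>)+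
qed

lemma triangular_poly_map_surj:
  fixes T :: "'a::field poly \<Rightarrow> 'a poly"
  assumes add: "\<And>p r. T (p + r) = T p + T r"
    and smult: "\<And>c p. T (smult c p) = smult c (T p)"
    and diag: "\<And>p j. (\<And>i. j < i \<Longrightarrow> coeff p i = 0) \<Longrightarrow> coeff (T p) j = d j * coeff p j"
    and nz: "\<And>j. j < m \<Longrightarrow> d j \<noteq> 0"
    and r: "\<And>i. m \<le> i \<Longrightarrow> coeff r i = 0"
  shows "\<exists>p. (\<forall>i\<ge>m. coeff p i = 0) \<and> T p = r"
  using nz r
proof (induction m arbitrary: r)
  case 0
  then have "r = 0" by (intro poly_eqI) simp
  moreover have "T 0 = 0" using smult[of 0 0] by simp
  ultimately show ?case by (intro exI[of _ 0]) simp
next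
  case (Suc m)
  define p0 where "p0 = monom (coeff r m / d m) m"
  have T_p0: "coeff (T p0) i = d i * coeff p0 i" if "m \<le> i" for i
    by (rule diag) (use that in \<open>auto simp: p0_def coeff_monom\<close>)
  have "coeff (r - T p0) i = 0" if "m \<le> i" for i
    using that T_p0[OF that] Suc.prems by (cases "i = m") (auto simp: p0_def coeff_monom)
  then obtain p where p: "\<forall>i\<ge>m. coeff p i = 0" "T p = r - T p0"
    using Suc.IH Suc.prems(1) by (metis less_Suc_eq)
  show ?case
  proof (intro exI[of _ "p0 + p"] conjI allI impI)
    fix i assume "Suc m \<le> i"
    then show "coeff (p0 + p) i = 0" using p(1) by (simp add: p0_def coeff_monom)
  qed (simp add: add p(2))
qed

lemma triangular_poly_map_eigenvector:
  fixes T :: "'a::field poly \<Rightarrow> 'a poly"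
  assumes add: "\<And>p r. T (p + r) = T p + T r"
    and smult: "\<And>c p. T (smult c p) = smult c (T p)"
    and diag: "\<And>p j. (\<And>i. j < i \<Longrightarrow> coeff p i = 0) \<Longrightarrow> coeff (T p) j = \<mu> j * coeff p j"
    and distinct: "\<And>j. j < n \<Longrightarrow> \<mu> j \<noteq> \<mu> n"
  shows "\<exists>P. degree P = n \<and> coeff P n = 1 \<and> T P = smult (\<mu> n) P"
proof -
  define T' where "T' p = T p - smult (\<mu> n) p" for p
  have diag_n: "coeff (T (monom 1 n)) i = \<mu> i * coeff (monom 1 n) i" if "n \<le> i" for i
    by (rule diag) (use that in \<open>auto simp: coeff_monom\<close>)
  have "\<exists>p. (\<forall>i\<ge>n. coeff p i = 0) \<and> T' p = - T' (monom 1 n)"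
  proof (rule triangular_poly_map_surj[where d = "\<lambda>j. \<mu> j - \<mu> n"])
    show "T' (p + r) = T' p + T' r" "T' (smult c p) = smult c (T' p)" for p r c
      by (simp_all add: T'_def add smult smult_add_right smult_diff_right algebra_simps)
    show "coeff (T' p) j = (\<mu> j - \<mu> n) * coeff p j" if "\<And>i. j < i \<Longrightarrow> coeff p i = 0" for p j
      using diag[OF that] by (simp add: T'_def algebra_simps)
    show "coeff (- T' (monom 1 n)) i = 0" if "n \<le> i" for i
      using diag_n[OF that] that by (auto simp: T'_def coeff_monom)
  qed (use distinct in auto)
  then obtain p where p: "\<forall>i\<ge>n. coeff p i = 0" "T' p = - T' (monom 1 n)" by blast
  have "coeff (monom 1 n + p) n = 1" using p(1) by simp
  moreover have "degree (monom 1 n + p) = n"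
    using p(1) by (intro antisym degree_le le_degree) (auto simp: coeff_monom)
  moreover have "T (monom 1 n + p) = smult (\<mu> n) (monom 1 n + p)"
    using p(2) by (simp add: T'_def add smult_add_right algebra_simps)
  ultimately show ?thesis by blast
qed

lemma solves_qEHT_if_qEHT_op_eq:
  assumes "q \<noteq> 1" and "qEHT_op q \<sigma> \<tau> P = smult (- lam) P"
  shows "solves_qEHT q \<sigma> \<tau> lam (poly P)"
proof -
  have "1 / q \<noteq> 1" using assms(1) by (auto simp: field_simps)
  then show ?thesis
    using arg_cong[OF assms(2), of poly] assms(1)
    by (simp add: solves_qEHT_def qD_poly qEHT_op_def fun_eq_iff)
qed

lemma qEHT_polynomial_solutions:
  assumes "q \<noteq> 1" "degree \<sigma> \<le> 2" "degree \<tau> \<le> 1" and inj: "inj (qEHT_lambda q \<sigma> \<tau>)"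
  shows "\<exists>P. \<forall>n. degree (P n) = n \<and> P n \<noteq> 0 \<and>
               solves_qEHT q \<sigma> \<tau> (qEHT_lambda q \<sigma> \<tau> n) (poly (P n))"
proof -
  have "\<exists>P. degree P = n \<and> coeff P n = 1 \<and> qEHT_op q \<sigma> \<tau> P = smult (- qEHT_lambda q \<sigma> \<tau> n) P" for n
    by (rule triangular_poly_map_eigenvector[OF qEHT_op_add qEHT_op_smult coeff_qEHT_op])
       (use assms inj_eq[OF inj] in auto)
  then obtain P where "\<And>n. degree (P n) = n \<and> coeff (P n) n = 1 \<and> qEHT_op q \<sigma> \<tau> (P n) = smult (- qEHT_lambda q \<sigma> \<tau> n) (P n)"
    by metis
  then show ?thesis using assms(1)
    by (intro exI[of _ P]) (metis one_neq_zero coeff_0 solves_qEHT_if_qEHT_op_eq)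
qed

lemma qEHT_lambda_closed_form:
  fixes q :: real and \<sigma> \<tau> :: "real poly"
  defines "s \<equiv> poly (pderiv (pderiv \<sigma>)) 0"
  defines "r \<equiv> 1 + (1 - 1/q) * coeff \<tau> 1 / (s/2)"
  assumes "0 < q" "q < 1" "s \<noteq> 0"
  shows "qEHT_lambda q \<sigma> \<tau> n = - s/2 * q / (1 - q)^2 * ((1 - q^n) * ((1/q)^n * q - r))"
proof (cases n)
  case (Suc m)
  define t where "t = coeff \<tau> 1"
  have q: "1 - 1/q = - (1 - q) / q" "q \<noteq> 0" "1 - q \<noteq> 0" using assms by (auto simp: field_simps)
  have t: "t = (r - 1) * (s/2) / (- (1 - q) / q)"
    using q assms by (simp add: r_def t_def field_simps)
  have alg: "- ((1 - A) / d) * (v + u * ((1 - B) / (- d / q)))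
      = - u * q / d^2 * ((1 - A) * (B - w))"
    if "v = (w - 1) * u / (- d / q)" "d \<noteq> 0" for A B d u v w :: real
  proof -
    have "v + u * ((1 - B) / (- d / q)) = u * q / d * (B - w)"
      using that q(2) by (simp add: field_simps)
    then show ?thesis by (simp add: power2_eq_square)
  qed
  have "int n - 1 = int m" using Suc by simp
  moreover have "qnum q (int n) = (1 - q^n) / (1 - q)" "qnum (1/q) (int m) = (1 - (1/q)^m) / (- (1 - q) / q)"
    using assms q(1) by (simp_all add: qnum_of_nat)
  ultimately have "qEHT_lambda q \<sigma> \<tau> n
      = - ((1 - q^n) / (1 - q)) * (t + s/2 * ((1 - (1/q)^m) / (- (1 - q) / q)))"
    unfolding qEHT_lambda_def s_def[symmetric] t_def[symmetric] by (simp add: mult_ac)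
  also have "\<dots> = - (s/2) * q / (1 - q)^2 * ((1 - q^n) * ((1/q)^m - r))"
    by (rule alg[OF t q(3)])
  also have "(1/q)^m = (1/q)^n * q" using Suc assms by simp
  finally show ?thesis by simp
qed (simp add: qEHT_lambda_def qnum_def)

lemma strict_mono_qEHT_eigenvalue_factor:
  fixes q r :: real
  assumes "0 < q" "q < 1" "0 < r" "r < 1"
  shows "strict_mono (\<lambda>n. (1 - q^n) * ((1/q)^n * q - r))"
proof (rule strict_monoI_Suc)
  fix n
  have "r * q^n \<le> r" using assms by (simp add: mult_left_le power_le_one)
  then have "r * q^n < 1" using assms by linarith
  moreover have "1 \<le> (1/q)^n" using assms by (simp add: one_le_power)
  ultimately have "0 < (1 - q) * ((1/q)^n - r * q^n)" using assms(2) by (simp only: mult_pos_pos)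
  moreover have "(1/q)^n * q^n = 1" using assms by (simp add: power_mult_distrib[symmetric])
  ultimately show "(1 - q^n) * ((1/q)^n * q - r) < (1 - q^Suc n) * ((1/q)^Suc n * q - r)"
    using assms(1) by (simp add: algebra_simps)
qed

lemma inj_qEHT_lambda:
  fixes q :: real and \<sigma> \<tau> :: "real poly"
  defines "s \<equiv> poly (pderiv (pderiv \<sigma>)) 0"
  defines "r \<equiv> 1 + (1 - 1/q) * coeff \<tau> 1 / (s/2)"
  assumes "0 < q" "q < 1" "s \<noteq> 0" "0 < r" "r < 1"
  shows "inj (qEHT_lambda q \<sigma> \<tau>)"
proof -
  define g where "g n = (1 - q^n) * ((1/q)^n * q - r)" for n
  have "inj g"
    unfolding g_def using strict_mono_qEHT_eigenvalue_factor assms strict_mono_imp_inj_on by blast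
  moreover have "qEHT_lambda q \<sigma> \<tau> n = - s/2 * q / (1 - q)^2 * g n" for n
    using qEHT_lambda_closed_form[of q \<sigma> \<tau> n] assms(3-5) by (simp add: g_def r_def s_def)
  moreover have "- s/2 * q / (1 - q)^2 \<noteq> 0" using assms by simp
  ultimately show ?thesis by (simp add: inj_def)
qed

section \<open>Orthogonality on the q-grid\<close>

(* At k = 0 the truncated index k - 1 is 0, which is harmless because Am 0 = 0. *)
lemma sum_weighted_second_difference_by_parts:
  fixes w Ap Am F G :: "nat \<Rightarrow> 'a::comm_ring"
  assumes "Am 0 = 0" "Ap N = 0"
    and pearson: "\<And>k. k < N \<Longrightarrow> w k * Ap k = w (Suc k) * Am (Suc k)"
  shows "(\<Sum>k\<le>N. w k * (Ap k * (F (Suc k) - F k) + Am k * (F (k - 1) - F k)) * G k)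
       = - (\<Sum>k<N. w k * Ap k * (F (Suc k) - F k) * (G (Suc k) - G k))"
proof -
  have forward: "(\<Sum>k\<le>N. w k * (Ap k * (F (Suc k) - F k)) * G k)
      = (\<Sum>k<N. w k * Ap k * (F (Suc k) - F k) * G k)"
    using assms(2) by (simp add: lessThan_Suc_atMost[symmetric] mult.assoc)
  have backward: "(\<Sum>k\<le>N. w k * (Am k * (F (k - 1) - F k)) * G k)
      = (\<Sum>k<N. w k * Ap k * (F k - F (Suc k)) * G (Suc k))"
    unfolding lessThan_Suc_atMost[symmetric] sum.lessThan_Suc_shift
    using assms(1) pearson by (simp add: mult.assoc)
  have "(\<Sum>k\<le>N. w k * (Ap k * (F (Suc k) - F k) + Am k * (F (k - 1) - F k)) * G k)
      = (\<Sum>k\<le>N. w k * (Ap k * (F (Suc k) - F k)) * G k)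
        + (\<Sum>k\<le>N. w k * (Am k * (F (k - 1) - F k)) * G k)"
    by (simp add: sum.distrib[symmetric] algebra_simps)
  also have "\<dots> = - (\<Sum>k<N. w k * Ap k * (F (Suc k) - F k) * (G (Suc k) - G k))"
    unfolding forward backward sum.distrib[symmetric] sum_negf[symmetric]
    by (simp add: algebra_simps)
  finally show ?thesis .
qed

lemma sum_weighted_eigenvectors_orthogonal:
  fixes w Ap Am F G :: "nat \<Rightarrow> 'a::field"
  assumes "Am 0 = 0" "Ap N = 0"
    and pearson: "\<And>k. k < N \<Longrightarrow> w k * Ap k = w (Suc k) * Am (Suc k)"
    and F: "\<And>k. k \<le> N \<Longrightarrow> Ap k * (F (Suc k) - F k) + Am k * (F (k - 1) - F k) = - \<mu> * F k"
    and G: "\<And>k. k \<le> N \<Longrightarrow> Ap k * (G (Suc k) - G k) + Am k * (G (k - 1) - G k) = - \<nu> * G k"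
    and "\<mu> \<noteq> \<nu>"
  shows "(\<Sum>k\<le>N. w k * F k * G k) = 0"
proof -
  have "- \<mu> * (\<Sum>k\<le>N. w k * F k * G k)
      = (\<Sum>k\<le>N. w k * (Ap k * (F (Suc k) - F k) + Am k * (F (k - 1) - F k)) * G k)"
    unfolding sum_distrib_left by (intro sum.cong refl) (subst F; simp)
  also have "\<dots> = - (\<Sum>k<N. w k * Ap k * (F (Suc k) - F k) * (G (Suc k) - G k))"
    by (rule sum_weighted_second_difference_by_parts[OF assms(1-3)])
  also have "\<dots> = - (\<Sum>k<N. w k * Ap k * (G (Suc k) - G k) * (F (Suc k) - F k))"
    by (simp add: mult_ac)
  also have "\<dots> = (\<Sum>k\<le>N. w k * (Ap k * (G (Suc k) - G k) + Am k * (G (k - 1) - G k)) * F k)"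
    by (rule sum_weighted_second_difference_by_parts[OF assms(1-3), symmetric])
  also have "\<dots> = - \<nu> * (\<Sum>k\<le>N. w k * F k * G k)"
    unfolding sum_distrib_left by (intro sum.cong refl) (subst G; simp)
  finally have "(\<mu> - \<nu>) * (\<Sum>k\<le>N. w k * F k * G k) = 0"
    by (simp add: algebra_simps)
  then show ?thesis using \<open>\<mu> \<noteq> \<nu>\<close> by simp
qed

lemma qEHT_three_term:
  fixes q x s t :: real and y :: "real \<Rightarrow> real"
  assumes "q \<noteq> 0" "q \<noteq> 1" "x \<noteq> 0"
  shows "s * qD (1/q) (qD q y) x + t * qD q y x
       = q^2 * s / ((1 - q)^2 * x^2) * (y (x/q) - y x)
         + q * (s + (1 - 1/q) * x * t) / ((1 - q)^2 * x^2) * (y (q * x) - y x)"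
proof -
  have D: "qD q y x = (y x - y (q * x)) / ((1 - q) * x)"
    "qD q y (x/q) = (y (x/q) - y x) / ((1 - q) * (x/q))"
    "qD (1/q) (qD q y) x = (qD q y x - qD q y (x/q)) / ((1 - 1/q) * x)"
    using assms by (simp_all add: qD_def)
  have alg: "s * (((A - B) / (d * x) - (C - A) / (d * (x/q))) / ((- d / q) * x)) + t * ((A - B) / (d * x))
      = q^2 * s / (d^2 * x^2) * (C - A) + q * (s + (- d / q) * x * t) / (d^2 * x^2) * (B - A)"
    if "d \<noteq> 0" for A B C d :: real
    using that assms by (simp add: field_simps power2_eq_square)
  have "1 - 1/q = - (1 - q) / q" "1 - q \<noteq> 0" using assms by (auto simp: field_simps)
  then show ?thesis
    unfolding D using alg[of "1 - q" "y x" "y (q * x)" "y (x/q)"] by simp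
qed

definition qpoch_quotient :: "real \<Rightarrow> real \<Rightarrow> real \<Rightarrow> real \<Rightarrow> real \<Rightarrow> real \<Rightarrow> real" where
  "qpoch_quotient q a b a1 b2 x =
     qpoch_inf (q * a / x) q * qpoch_inf (x / b) q / (qpoch_inf (a1 / x) q * qpoch_inf (x / b2) q)"

definition qEHT_weight :: "complex \<Rightarrow> real \<Rightarrow> real \<Rightarrow> real \<Rightarrow> real \<Rightarrow> real \<Rightarrow> real \<Rightarrow> complex" where
  "qEHT_weight \<iota> q a b a1 b2 x =
     exp (\<iota> * complex_of_real (ln \<bar>x\<bar>)) * complex_of_real (qpoch_quotient q a b a1 b2 x)"

lemma qpoch_quotient_nonzero:
  assumes "0 < q" "q < 1" "0 < x" "q * a < x" "x < b" "a1 < x" "x < b2"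
  shows "qpoch_quotient q a b a1 b2 x \<noteq> 0"
  using assms by (simp add: qpoch_quotient_def qpoch_inf_nonzero)

lemma qpoch_quotient_step:
  assumes q: "0 < q" "q < 1" and x: "0 < x" "a1 < x" "x < q * b2" and "b \<noteq> 0"
  shows "b2 * (x - a1) * (x - q * b) * qpoch_quotient q a b a1 b2 x
       = b * (x - q * a) * (x - q * b2) * qpoch_quotient q a b a1 b2 (x / q)"
proof -
  define U where "U = qpoch_inf (q * a / x * q) q"
  define V where "V = qpoch_inf (x / b) q"
  define W where "W = qpoch_inf (a1 / x * q) q"
  define Z where "Z = qpoch_inf (x / b2) q"
  define R where "R = U * V / (W * Z)"
  have "0 < q * b2" using x by linarith
  then have b2: "0 < b2" using q by (simp add: zero_less_mult_iff)
  have "a1 * q < x"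
  proof (cases "a1 \<le> 0")
    case True
    then have "a1 * q \<le> 0" using q by (simp add: mult_nonpos_nonneg)
    then show ?thesis using x by linarith
  next
    case False
    then have "a1 * q < a1" using q by simp
    then show ?thesis using x by linarith
  qed
  then have "W \<noteq> 0"
    unfolding W_def using q x by (intro qpoch_inf_nonzero) (auto simp: field_simps)
  have "q * b2 < b2" using q b2 by simp
  then have "x < b2" using x by linarith
  then have "Z \<noteq> 0"
    unfolding Z_def using q x b2 by (intro qpoch_inf_nonzero) (auto simp: field_simps)
  have Q_x: "qpoch_quotient q a b a1 b2 x = (1 - q * a / x) * U * V / ((1 - a1 / x) * W * Z)"
    unfolding qpoch_quotient_def U_def V_def W_def Z_def
    using q by (subst (1 2) qpoch_inf_rec) (simp_all add: mult.assoc)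
  have at_x: "(x - a1) * qpoch_quotient q a b a1 b2 x = (x - q * a) * R"
    unfolding Q_x R_def using x \<open>W \<noteq> 0\<close> \<open>Z \<noteq> 0\<close> by (simp add: field_simps)
  have Q_x_div_q: "qpoch_quotient q a b a1 b2 (x / q) = U * (1 - x / q / b) * V / (W * (1 - x / q / b2) * Z)"
  proof -
    have "q * a / (x / q) = q * a / x * q" "x / q / b * q = x / b" "a1 / (x / q) = a1 / x * q"
      "x / q / b2 * q = x / b2" using q x by auto
    then show ?thesis
      unfolding qpoch_quotient_def U_def V_def W_def Z_def
      using q by (subst (2 4) qpoch_inf_rec) simp_all
  qed
  have at_x_div_q: "b * (x - q * b2) * qpoch_quotient q a b a1 b2 (x / q) = b2 * (x - q * b) * R"
    unfolding Q_x_div_q R_def using q x b2 \<open>b \<noteq> 0\<close> \<open>W \<noteq> 0\<close> \<open>Z \<noteq> 0\<close> by (simp add: field_simps)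
  have "b2 * (x - a1) * (x - q * b) * qpoch_quotient q a b a1 b2 x
      = b2 * (x - q * b) * ((x - a1) * qpoch_quotient q a b a1 b2 x)" by (simp only: mult_ac)
  also have "\<dots> = (x - q * a) * (b2 * (x - q * b) * R)" unfolding at_x by (simp only: mult_ac)
  also have "\<dots> = b * (x - q * a) * (x - q * b2) * qpoch_quotient q a b a1 b2 (x / q)"
    unfolding at_x_div_q[symmetric] by (simp only: mult_ac)
  finally show ?thesis .
qed

lemma exp_mult_ln_abs_divide:
  fixes \<iota> :: complex and q x :: real
  assumes "0 < q" "0 < x"
  shows "exp (\<iota> * complex_of_real (ln \<bar>x / q\<bar>))
       = exp (\<iota> * complex_of_real (ln \<bar>x\<bar>)) / exp (\<iota> * complex_of_real (ln q))"
  using assms by (simp add: ln_divide_pos right_diff_distrib exp_diff)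

lemma qEHT_weight_pearson:
  fixes \<iota> :: complex
  assumes q: "0 < q" "q < 1" and x: "0 < x" "a1 < x" "x < q * b2"
    and \<iota>: "exp (\<iota> * complex_of_real (ln q)) = complex_of_real ((1/q)^3 * s2 * b2 / (s1 * b))"
  shows "q * qEHT_weight \<iota> q a b a1 b2 x * complex_of_real (s1/2 * (x - a1) * (x - q * b))
       = qEHT_weight \<iota> q a b a1 b2 (x/q) * complex_of_real (s2/2 * (x/q - a) * (x/q - b2))"
proof -
  define C where "C = (1/q)^3 * s2 * b2 / (s1 * b)"
  have "C \<noteq> 0" using \<iota> by (auto simp: C_def)
  then have "s1 \<noteq> 0" "s2 \<noteq> 0" "b \<noteq> 0" "b2 \<noteq> 0" by (auto simp: C_def)
  let ?Q = "qpoch_quotient q a b a1 b2"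
  have "?Q (x/q) * (s2/2 * (x/q - a) * (x/q - b2)) / C
      = q * s1 / (2 * b2) * (b * (x - q * a) * (x - q * b2) * ?Q (x/q))"
    using q \<open>s1 \<noteq> 0\<close> \<open>s2 \<noteq> 0\<close> \<open>b \<noteq> 0\<close> \<open>b2 \<noteq> 0\<close>
    by (simp add: C_def field_simps power3_eq_cube power2_eq_square)
  also have "\<dots> = q * ?Q x * (s1/2 * (x - a1) * (x - q * b))"
    unfolding qpoch_quotient_step[OF q x \<open>b \<noteq> 0\<close>, symmetric] using \<open>b2 \<noteq> 0\<close> by simp
  finally have real_eq: "?Q (x/q) * (s2/2 * (x/q - a) * (x/q - b2)) / C
      = q * ?Q x * (s1/2 * (x - a1) * (x - q * b))" .
  let ?E = "\<lambda>x. exp (\<iota> * complex_of_real (ln \<bar>x\<bar>))"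
  have E: "?E (x/q) = ?E x / complex_of_real C"
    using exp_mult_ln_abs_divide[OF q(1) x(1), of \<iota>] \<iota> by (simp add: C_def)
  have "qEHT_weight \<iota> q a b a1 b2 (x/q) * complex_of_real (s2/2 * (x/q - a) * (x/q - b2))
      = ?E x * complex_of_real (?Q (x/q) * (s2/2 * (x/q - a) * (x/q - b2)) / C)"
    unfolding qEHT_weight_def E by (simp add: mult_ac)
  also have "\<dots> = q * qEHT_weight \<iota> q a b a1 b2 x * complex_of_real (s1/2 * (x - a1) * (x - q * b))"
    unfolding real_eq by (simp add: qEHT_weight_def)
  finally show ?thesis ..
qed

lemma qEHT_weight_nonzero_on_grid:
  assumes q: "0 < q" "q < 1" and zeros: "a1 < a2" "0 < a2" "b1 < b2"
    and N: "(1/q)^N * a2 = b1" and "k \<le> N"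
  shows "qEHT_weight \<iota> q a2 (b1/q) a1 b2 ((1/q)^k * a2) \<noteq> 0"
proof -
  define x where "x = (1/q)^k * a2"
  have "0 < b1" unfolding N[symmetric] using q zeros by simp
  then have "b1 < b1 / q" using q by (simp add: field_simps)
  moreover have "a2 \<le> x" using q zeros by (simp add: x_def one_le_power)
  moreover have "x \<le> b1"
    unfolding x_def N[symmetric] using q zeros \<open>k \<le> N\<close> by (intro mult_right_mono power_increasing) auto
  moreover have "q * a2 < a2" using q zeros by simp
  ultimately have "qpoch_quotient q a2 (b1/q) a1 b2 x \<noteq> 0"
    using q zeros by (intro qpoch_quotient_nonzero) linarith+
  then show ?thesis by (simp add: qEHT_weight_def x_def)
qed

lemma qEHT_solutions_orthogonal:
  fixes q s1 s2 a1 b1 a2 b2 lam mu :: real and \<sigma> \<tau> :: "real poly" and \<iota> :: complex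
    and y z :: "real \<Rightarrow> real"
  assumes q: "0 < q" "q < 1"
    and \<sigma>: "\<And>x. poly \<sigma> x = s1/2 * (x - a1) * (x - b1)"
    and \<sigma>2: "\<And>x. q * (poly \<sigma> x + (1 - 1/q) * x * poly \<tau> x) = s2/2 * (x - a2) * (x - b2)"
    and zeros: "a1 < a2" "0 < a2" "b1 < b2"
    and N: "(1/q)^N * a2 = b1"
    and \<iota>: "exp (\<iota> * complex_of_real (ln q)) = complex_of_real ((1/q)^3 * s2 * b2 / (s1 * (b1/q)))"
    and y: "solves_qEHT q \<sigma> \<tau> lam y" and z: "solves_qEHT q \<sigma> \<tau> mu z" and "lam \<noteq> mu"
  shows "qinv_integral q a2 N (\<lambda>x. complex_of_real (y x * z x) * qEHT_weight \<iota> q a2 (b1/q) a1 b2 x) = 0"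
proof -
  let ?\<rho> = "qEHT_weight \<iota> q a2 (b1/q) a1 b2"
  define x where "x k = (1/q)^k * a2" for k
  define w where "w k = complex_of_real ((1/q)^k) * ?\<rho> (x k)" for k
  define Ap where "Ap k = q^2 * poly \<sigma> (x k) / ((1 - q)^2 * (x k)^2)" for k
  define Am where "Am k = q * (poly \<sigma> (x k) + (1 - 1/q) * x k * poly \<tau> (x k)) / ((1 - q)^2 * (x k)^2)" for k
  have x_pos: "0 < x k" for k using q zeros by (simp add: x_def)
  have x_Suc: "x (Suc k) = x k / q" for k by (simp add: x_def)
  have x_ge: "a2 \<le> x k" for k using q zeros by (simp add: x_def one_le_power)
  have x_N: "x N = b1" using N by (simp add: x_def)
  have x_lt: "x k < q * b2" if "k < N" for k
  proof -
    have "(1/q)^Suc k \<le> (1/q)^N" using that q by (intro power_increasing) simp_all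
    then have "x (Suc k) \<le> x N" unfolding x_def using zeros(2) by (intro mult_right_mono) auto
    then have "x k \<le> q * b1" using x_N x_Suc q by (simp add: field_simps del: x_def)
    moreover have "q * b1 < q * b2" using zeros q by simp
    ultimately show ?thesis by linarith
  qed
  have Am_0: "Am 0 = 0" using \<sigma>2[of a2] by (simp add: Am_def x_def)
  have Ap_N: "Ap N = 0" using \<sigma>[of b1] x_N by (simp add: Ap_def)
  have three_term: "Ap k * (f (x (Suc k)) - f (x k)) + Am k * (f (x (k - 1)) - f (x k)) = - l * f (x k)"
    if f: "solves_qEHT q \<sigma> \<tau> l f" for f l k
  proof -
    have "Am k * (f (x (k - 1)) - f (x k)) = Am k * (f (q * x k) - f (x k))"
      using q Am_0 by (cases k) (simp_all add: x_Suc)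
    then have "Ap k * (f (x (Suc k)) - f (x k)) + Am k * (f (x (k - 1)) - f (x k))
        = Ap k * (f (x (Suc k)) - f (x k)) + Am k * (f (q * x k) - f (x k))" by simp
    also have "\<dots> = poly \<sigma> (x k) * qD (1/q) (qD q f) (x k) + poly \<tau> (x k) * qD q f (x k)"
      unfolding Ap_def Am_def x_Suc using q x_pos[of k] by (simp add: qEHT_three_term)
    also have "\<dots> = - l * f (x k)"
      using f unfolding solves_qEHT_def by (simp add: eq_neg_iff_add_eq_0 add.assoc)
    finally show ?thesis .
  qed
  have pearson: "w k * complex_of_real (Ap k) = w (Suc k) * complex_of_real (Am (Suc k))"
    if "k < N" for k
  proof -
    have a1_lt: "a1 < x k" using x_ge zeros(1) by (meson less_le_trans)
    define c where "c = (1/q)^k * q / ((1 - q)^2 * (x k)^2)"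
    define S2 where "S2 = q * (poly \<sigma> (x (Suc k)) + (1 - 1/q) * x (Suc k) * poly \<tau> (x (Suc k)))"
    have weight_eq: "q * ?\<rho> (x k) * complex_of_real (poly \<sigma> (x k)) = ?\<rho> (x (Suc k)) * complex_of_real S2"
      unfolding S2_def \<sigma>2 unfolding \<sigma> x_Suc
      using qEHT_weight_pearson[where a = a2, OF q x_pos a1_lt x_lt[OF that] \<iota>] q by simp
    have "w k * complex_of_real (Ap k) = complex_of_real c * (q * ?\<rho> (x k) * complex_of_real (poly \<sigma> (x k)))"
      by (simp add: w_def Ap_def c_def power2_eq_square)
    also have "\<dots> = ?\<rho> (x (Suc k)) * complex_of_real (c * S2)"
      by (simp add: weight_eq)
    also have "Am (Suc k) = S2 / ((1 - q)^2 * (x k / q)^2)"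
      by (simp add: Am_def S2_def x_Suc)
    then have "c * S2 = (1/q)^Suc k * Am (Suc k)"
      using q x_pos[of k] by (simp add: c_def field_simps power2_eq_square)
    finally show ?thesis by (simp add: w_def mult_ac)
  qed
  have "(\<Sum>k\<le>N. w k * complex_of_real (y (x k)) * complex_of_real (z (x k))) = 0"
    by (rule sum_weighted_eigenvectors_orthogonal[where Ap = "\<lambda>k. complex_of_real (Ap k)"
          and Am = "\<lambda>k. complex_of_real (Am k)" and \<mu> = "complex_of_real lam" and \<nu> = "complex_of_real mu"])
       (use Am_0 Ap_N pearson \<open>lam \<noteq> mu\<close> three_term[OF y] three_term[OF z] in
          \<open>simp_all flip: of_real_diff of_real_mult of_real_add of_real_minus\<close>)
  then show ?thesis
    by (simp add: qinv_integral_def w_def x_def atLeast0AtMost mult_ac)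
qed

section \<open>Nondegeneracy\<close>

lemma linear_functional_vanishes_on_degree_le:
  fixes L :: "real poly \<Rightarrow> 'a::real_algebra_1" and P :: "nat \<Rightarrow> real poly"
  assumes add: "\<And>g h. L (g + h) = L g + L h" and smult: "\<And>c g. L (smult c g) = of_real c * L g"
    and P: "\<And>m. m \<le> N \<Longrightarrow> degree (P m) = m \<and> P m \<noteq> 0"
    and zero: "\<And>m. m \<le> N \<Longrightarrow> L (P m) = 0"
  shows "degree g \<le> N \<Longrightarrow> L g = 0"
proof (induction "degree g" arbitrary: g rule: less_induct)
  case less
  define d where "d = degree g"
  define h where "h = g - smult (coeff g d / lead_coeff (P d)) (P d)"
  have P_d: "degree (P d) = d" "P d \<noteq> 0" using P less.prems by (auto simp: d_def)
  then have "lead_coeff (P d) \<noteq> 0" by (metis leading_coeff_0_iff)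
  have h_coeff: "coeff h i = 0" if "d \<le> i" for i
    using that P_d \<open>lead_coeff (P d) \<noteq> 0\<close> by (cases "i = d") (auto simp: h_def d_def coeff_eq_0)
  have "L h = 0"
  proof (cases "d = 0")
    case True
    then have "h = 0" using h_coeff by (intro poly_eqI) simp
    then show ?thesis using smult[of 0 0] by simp
  next
    case False
    have "degree h \<le> d - 1" using h_coeff by (intro degree_le) simp
    then have "degree h < degree g" using False by (simp add: d_def)
    then show ?thesis using less.hyps less.prems by simp
  qed
  moreover have "g = h + smult (coeff g d / lead_coeff (P d)) (P d)" by (simp add: h_def)
  ultimately show ?case using add smult zero[of d] less.prems by (metis add_0 mult_zero_right d_def)
qed

lemma weighted_sum_vanishing_on_polys_imp_zero:
  fixes w :: "nat \<Rightarrow> 'a::real_field" and x f :: "nat \<Rightarrow> real"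
  assumes inj: "inj_on x {..N}" and w: "\<And>k. k \<le> N \<Longrightarrow> w k \<noteq> 0"
    and vanish: "\<And>h. degree h \<le> N \<Longrightarrow> (\<Sum>k\<le>N. w k * of_real (f k * poly h (x k))) = 0"
    and "j \<le> N"
  shows "f j = 0"
proof -
  define h where "h = (\<Prod>i\<in>{..N} - {j}. [:- x i, 1:])"
  have "degree h \<le> (\<Sum>i\<in>{..N} - {j}. degree [:- x i, 1:])"
    unfolding h_def by (rule order_trans[OF degree_prod_sum_le]) auto
  also have "\<dots> = N" using \<open>j \<le> N\<close> by simp
  finally have "(\<Sum>k\<le>N. w k * of_real (f k * poly h (x k))) = 0" by (rule vanish)
  moreover have "poly h (x k) = 0" if "k \<in> {..N} - {j}" for k
    unfolding h_def poly_prod using that by (intro prod_zero) auto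
  ultimately have "w j * of_real (f j * poly h (x j)) = 0"
    using \<open>j \<le> N\<close> by (simp add: sum.remove[of _ j])
  moreover have "poly h (x j) \<noteq> 0"
    unfolding h_def poly_prod using inj \<open>j \<le> N\<close> by (auto simp: inj_on_eq_iff)
  ultimately show ?thesis using w[OF \<open>j \<le> N\<close>] by simp
qed

lemma qinv_integral_square_nonzero:
  fixes \<rho> :: "real \<Rightarrow> complex" and P :: "nat \<Rightarrow> real poly"
  assumes q: "0 < q" "q < 1" and "a \<noteq> 0" and \<rho>: "\<And>k. k \<le> N \<Longrightarrow> \<rho> ((1/q)^k * a) \<noteq> 0"
    and P: "\<And>m. m \<le> N \<Longrightarrow> degree (P m) = m \<and> P m \<noteq> 0" and "n \<le> N"
    and orth: "\<And>m. m \<le> N \<Longrightarrow> m \<noteq> n \<Longrightarrow>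
      qinv_integral q a N (\<lambda>x. complex_of_real (poly (P n) x * poly (P m) x) * \<rho> x) = 0"
  shows "qinv_integral q a N (\<lambda>x. complex_of_real (poly (P n) x * poly (P n) x) * \<rho> x) \<noteq> 0"
proof
  assume self: "qinv_integral q a N (\<lambda>x. complex_of_real (poly (P n) x * poly (P n) x) * \<rho> x) = 0"
  define x where "x k = (1/q)^k * a" for k
  define w where "w k = complex_of_real ((1/q - 1) * a * (1/q)^k) * \<rho> (x k)" for k
  define L where "L h = qinv_integral q a N (\<lambda>x. complex_of_real (poly (P n) x * poly h x) * \<rho> x)" for h
  have L_eq: "L h = (\<Sum>k\<le>N. w k * complex_of_real (poly (P n) (x k) * poly h (x k)))" for h
    by (simp add: L_def qinv_integral_def w_def x_def atLeast0AtMost sum_distrib_left mult_ac)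
  have "L (g + h) = L g + L h" for g h
    unfolding L_eq by (simp add: sum.distrib[symmetric] algebra_simps)
  moreover have "L (smult c g) = complex_of_real c * L g" for c g
    unfolding L_eq by (simp add: sum_distrib_left algebra_simps)
  moreover have "L (P m) = 0" if "m \<le> N" for m
    using self orth[OF that] by (cases "m = n") (simp_all add: L_def)
  ultimately have L_zero: "L h = 0" if "degree h \<le> N" for h
    using linear_functional_vanishes_on_degree_le[of L N P] P that by blast
  have inj: "inj_on x {..N}"
    using q \<open>a \<noteq> 0\<close> by (intro inj_onI) (auto simp: x_def power_inject_exp)
  have roots: "poly (P n) (x k) = 0" if "k \<le> N" for k
  proof (rule weighted_sum_vanishing_on_polys_imp_zero[where w = w and N = N, OF inj _ _ that])
    show "w k \<noteq> 0" if "k \<le> N" for k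
      using q \<open>a \<noteq> 0\<close> \<rho>[OF that] by (simp add: w_def x_def)
  qed (use L_zero in \<open>simp add: L_eq\<close>)
  have "P n = 0"
  proof (rule poly_eqI_degree[of "x ` {..N}"])
    show "poly (P n) y = poly 0 y" if "y \<in> x ` {..N}" for y using that roots by auto
    have "card (x ` {..N}) = Suc N" using inj by (simp add: card_image)
    then show "degree (P n) < card (x ` {..N})" "degree 0 < card (x ` {..N})"
      using P[OF \<open>n \<le> N\<close>] \<open>n \<le> N\<close> by auto
  qed
  then show False using P[OF \<open>n \<le> N\<close>] by blast
qed

theorem theorem4p3:
  fixes q :: real and \<sigma>1 \<tau> :: "real poly" and a1 b1 a2 b2 :: real and N :: nat
    and \<iota> :: complex
  defines "s1 \<equiv> poly (pderiv (pderiv \<sigma>1)) 0"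
    and "\<sigma>2 \<equiv> smult q (\<sigma>1 + [:0, 1 - 1/q:] * \<tau>)"
  defines "s2 \<equiv> poly (pderiv (pderiv \<sigma>2)) 0"
    and "\<Lambda> \<equiv> (1/q)^2 * (1 + (1 - 1/q) * coeff \<tau> 1 / (s1 / 2))"
    and "a \<equiv> a2" and "b \<equiv> b1 / q"
  defines "\<rho> \<equiv> (\<lambda>x::real. exp (\<iota> * complex_of_real (ln \<bar>x\<bar>)) *
              complex_of_real (qpoch_inf (q * a / x) q * qpoch_inf (x / b) q /
                               (qpoch_inf (a1 / x) q * qpoch_inf (x / b2) q)))"
  assumes q: "0 < q" "q < 1"
    and deg_\<sigma>1: "degree \<sigma>1 \<le> 2"
    and deg_\<tau>: "degree \<tau> \<le> 1" and tau1: "coeff \<tau> 1 \<noteq> 0"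
    and \<sigma>1_fact: "\<sigma>1 = smult (s1 / 2) ([:-a1, 1:] * [:-b1, 1:])"
    and \<sigma>2_fact: "\<sigma>2 = smult (s2 / 2) ([:-a2, 1:] * [:-b2, 1:])"
    and s1: "s1 \<noteq> 0" and s2: "s2 \<noteq> 0"
    and zeros: "0 < a1" "a1 < a2" "a2 < b1" "b1 < b2"
    and Lam: "0 < q^2 * \<Lambda>" "q^2 * \<Lambda> < 1"
    and N: "(1/q) ^ (N + 1) * a = b"
    and iota: "exp (\<iota> * complex_of_real (ln q)) = complex_of_real ((1/q)^3 * s2 * b2 / (s1 * b))"
  shows "\<exists>(P :: nat \<Rightarrow> real poly) (d2 :: nat \<Rightarrow> complex).
           (\<forall>n\<le>N. P n \<noteq> 0 \<and> degree (P n) = n \<and>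
                   solves_qEHT q \<sigma>1 \<tau> (qEHT_lambda q \<sigma>1 \<tau> n) (poly (P n)) \<and> d2 n \<noteq> 0) \<and>
           (\<forall>m\<le>N. \<forall>n\<le>N.
              qinv_integral q a N (\<lambda>x. complex_of_real (poly (P n) x * poly (P m) x) * \<rho> x)
                = (if m = n then d2 n else 0))"
proof -
  have "q^2 * \<Lambda> = 1 + (1 - 1/q) * coeff \<tau> 1 / (s1 / 2)"
    using q by (simp add: \<Lambda>_def power_divide)
  then have "inj (qEHT_lambda q \<sigma>1 \<tau>)"
    using inj_qEHT_lambda[of q \<sigma>1 \<tau>] q s1 Lam by (simp add: s1_def)
  then obtain P where P: "\<And>n. degree (P n) = n \<and> P n \<noteq> 0 \<and>
      solves_qEHT q \<sigma>1 \<tau> (qEHT_lambda q \<sigma>1 \<tau> n) (poly (P n))"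
    using qEHT_polynomial_solutions[of q \<sigma>1 \<tau>] q deg_\<sigma>1 deg_\<tau> by auto
  have \<rho>_eq: "\<rho> = qEHT_weight \<iota> q a2 (b1/q) a1 b2"
    by (simp add: fun_eq_iff \<rho>_def a_def b_def qEHT_weight_def qpoch_quotient_def)
  have N': "(1/q)^N * a2 = b1" using N q by (simp add: a_def b_def field_simps)
  have orth: "qinv_integral q a N (\<lambda>x. complex_of_real (poly (P n) x * poly (P m) x) * \<rho> x) = 0"
    if "m \<noteq> n" for m n
    unfolding \<rho>_eq a_def
  proof (rule qEHT_solutions_orthogonal[OF q _ _ zeros(2) _ zeros(4) N'])
    show "poly \<sigma>1 x = s1/2 * (x - a1) * (x - b1)" for x
      by (subst \<sigma>1_fact) (simp add: field_simps)
    show "q * (poly \<sigma>1 x + (1 - 1/q) * x * poly \<tau> x) = s2/2 * (x - a2) * (x - b2)" for x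
      using arg_cong[OF \<sigma>2_fact, of "\<lambda>p. poly p x"] by (simp add: \<sigma>2_def field_simps)
  qed (use zeros iota P \<open>inj (qEHT_lambda q \<sigma>1 \<tau>)\<close> that in \<open>auto simp: b_def inj_eq\<close>)
  define d2 where "d2 n = qinv_integral q a N (\<lambda>x. complex_of_real (poly (P n) x * poly (P n) x) * \<rho> x)" for n
  have "d2 n \<noteq> 0" if "n \<le> N" for n
    unfolding d2_def
    using qinv_integral_square_nonzero[OF q _ _ _ that, of a \<rho> P] orth P zeros
      qEHT_weight_nonzero_on_grid[OF q zeros(2) _ zeros(4) N']
    by (auto simp: \<rho>_eq a_def)
  then show ?thesis
    using P orth by (intro exI[of _ P] exI[of _ d2]) (auto simp: d2_def)
qed

end
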